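(* Let $P$ be a connected polyomino with consistent parity and without holes. Define $L_1=B(P,1)\setminus P$ and $L_{-1}=P\setminus B(P,-1)$. Then $G(L_1)$ and $G(L_{-1})$ both have a Hamiltonian cycle of even length.
   Context: A cell is a unit square $[i,i+1]\times[j,j+1]$ with $i,j\in\mathbb{Z}$. A polyomino is a finite union of cells. For a union $X$ of cells (up to boundary), $G(X)$ is the graph whose vertices are the cells of $X$, with two cells adjacent if they share an edge. $P$ is connected if $G(P)$ is connected. A polyomino $P$ has consistent parity if all first coordinates of its corners have the same parity and all second coordinates of its corners have the same parity. Distances use the $L_\infty$-norm. For $A\subseteq\mathbb{R}^2$ and $r\ge 0$, $B(A,r)=\{x:\mathrm{dist}(x,A)\le r\}$. For $r<0$, $B(A,r)=B(A^c,-r)^c$. *)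

theory Defs
  imports "HOL-Analysis.Analysis"
begin

text \<open>A cell [i,i+1] x [j,j+1] is identified with its lower-left corner (i,j).\<close>
type_synonym cell = "int \<times> int"

definition cell_pts :: "cell \<Rightarrow> (real \<times> real) set" where
  "cell_pts c = {(x,y). of_int (fst c) \<le> x \<and> x \<le> of_int (fst c) + 1 \<and>
                        of_int (snd c) \<le> y \<and> y \<le> of_int (snd c) + 1}"

text \<open>Open cell (interior), used for "union of cells up to boundary".\<close>
definition cell_open :: "cell \<Rightarrow> (real \<times> real) set" where
  "cell_open c = {(x,y). of_int (fst c) < x \<and> x < of_int (fst c) + 1 \<and>
                         of_int (snd c) < y \<and> y < of_int (snd c) + 1}"

definition region :: "cell set \<Rightarrow> (real \<times> real) set" where
  "region P = \<Union> (cell_pts ` P)"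

definition polyomino :: "cell set \<Rightarrow> bool" where
  "polyomino P \<longleftrightarrow> finite P \<and> P \<noteq> {}"

definition cells_of :: "(real \<times> real) set \<Rightarrow> cell set" where
  "cells_of X = {c. cell_open c \<subseteq> X}"

definition cell_adj :: "cell \<Rightarrow> cell \<Rightarrow> bool" where
  "cell_adj c d \<longleftrightarrow> \<bar>fst c - fst d\<bar> + \<bar>snd c - snd d\<bar> = 1"

definition graph_connected :: "cell set \<Rightarrow> bool" where
  "graph_connected S \<longleftrightarrow>
     (\<forall>c\<in>S. \<forall>d\<in>S. (\<lambda>u v. u \<in> S \<and> v \<in> S \<and> cell_adj u v)\<^sup>*\<^sup>* c d)"

definition ham_cycle :: "cell set \<Rightarrow> cell list \<Rightarrow> bool" where
  "ham_cycle S vs \<longleftrightarrow> distinct vs \<and> set vs = S \<and> length vs \<ge> 3 \<and>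
     (\<forall>i < length vs. cell_adj (vs ! i) (vs ! (Suc i mod length vs)))"

text \<open>Corners of a polyomino: lattice points at which the boundary turns (among the
  four cells around the point, an odd number lie in P, or exactly two diagonal ones).\<close>
definition corners :: "cell set \<Rightarrow> (int \<times> int) set" where
  "corners P = {(a,b).
     odd (card ({(a-1,b-1),(a,b-1),(a-1,b),(a,b)} \<inter> P)) \<or>
     (((a,b) \<in> P \<longleftrightarrow> (a-1,b-1) \<in> P) \<and> ((a-1,b) \<in> P \<longleftrightarrow> (a,b-1) \<in> P) \<and>
      ((a,b) \<in> P \<longleftrightarrow> (a-1,b) \<notin> P))}"

definition consistent_parity :: "cell set \<Rightarrow> bool" where
  "consistent_parity P \<longleftrightarrow>
     (\<exists>p. \<forall>v\<in>corners P. fst v mod 2 = p) \<and> (\<exists>q. \<forall>v\<in>corners P. snd v mod 2 = q)"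

definition without_holes :: "cell set \<Rightarrow> bool" where
  "without_holes P \<longleftrightarrow> connected (- region P)"

definition dinf :: "real \<times> real \<Rightarrow> real \<times> real \<Rightarrow> real" where
  "dinf p q = max \<bar>fst p - fst q\<bar> \<bar>snd p - snd q\<bar>"

definition setdist_inf :: "real \<times> real \<Rightarrow> (real \<times> real) set \<Rightarrow> real" where
  "setdist_inf x A = Inf (dinf x ` A)"

definition Binf :: "(real \<times> real) set \<Rightarrow> real \<Rightarrow> (real \<times> real) set" where
  "Binf A r = (if 0 \<le> r then {x. setdist_inf x A \<le> r}
               else - {x. setdist_inf x (- A) \<le> - r})"

end

(*
  Consistent parity means that the boundary of P turns only at points of one coset of 2Z^2, so P
  is a translate of the blow-up of a set Q of lattice points, each point becoming a 2x2 block.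
  Connectedness of P, and of its complement in the plane, make Q and -Q connected in the grid
  graph, and the layers L_1 and L_(-1) are the boundary layers of the blow-ups of -Q and of Q.

  On the boundary layer of the blow-up of S, walking clockwise around the blocks and turning into
  S whenever possible is a bijection whose steps are grid edges.  To see that it is a single
  cycle, count modulo 2 how often a union T of its orbits crosses the horizontal ray from the
  centre of a block.  This winding parity is constant on connected sets of blocks, and it changes
  across an edge between S and -S exactly when T passes the layer cell at that edge.  One orbit
  passes such a cell, so by connectivity of S and -S it passes all of them, and every layer cell
  reaches one of them within two steps.  Finally, every cycle of the grid graph has even length,
  by the checkerboard colouring.
*)

theory Submission
  imports Defs "HOL-Combinatorics.Orbits"
begin

section \<open>Hamiltonian cycles in the grid graph\<close>

lemma cell_adj_iff:
  "cell_adj c d \<longleftrightarrow>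
     d = (fst c + 1, snd c) \<or> d = (fst c - 1, snd c) \<or> d = (fst c, snd c + 1) \<or> d = (fst c, snd c - 1)"
  unfolding cell_adj_def by (cases c; cases d) (simp; arith)

lemma cell_adj_irrefl: "\<not> cell_adj c c"
  unfolding cell_adj_def by simp

lemma cell_adj_sym: "cell_adj c d \<longleftrightarrow> cell_adj d c"
  unfolding cell_adj_def by (simp add: abs_minus_commute)

lemma cell_adj_translate: "cell_adj (v + c) (v + d) \<longleftrightarrow> cell_adj c d"
  unfolding cell_adj_def by simp

lemma cell_adj_parity: "cell_adj c d \<Longrightarrow> odd (fst d + snd d) \<longleftrightarrow> \<not> odd (fst c + snd c)"
  unfolding cell_adj_iff by auto

lemma ham_cycle_even_length:
  assumes "ham_cycle S vs"
  shows "even (length vs)"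
proof -
  let ?n = "length vs" and ?odd = "\<lambda>c. odd (fst c + snd c)"
  have n: "3 \<le> ?n" and adj: "\<And>i. i < ?n \<Longrightarrow> cell_adj (vs ! i) (vs ! (Suc i mod ?n))"
    using assms unfolding ham_cycle_def by auto
  have alt: "?odd (vs ! i) \<longleftrightarrow> ?odd (vs ! 0) \<noteq> odd i" if "i < ?n" for i
    using that
  proof (induction i)
    case (Suc i)
    then have "cell_adj (vs ! i) (vs ! Suc i)"
      using adj[of i] by simp
    then have "?odd (vs ! Suc i) \<longleftrightarrow> \<not> ?odd (vs ! i)"
      by (rule cell_adj_parity)
    with Suc show ?case by (simp del: even_add)
  qed simp
  have last: "?n - 1 < ?n" "Suc (?n - 1) = ?n"
    using n by auto
  have "cell_adj (vs ! (?n - 1)) (vs ! 0)"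
    using adj[OF last(1)] unfolding last(2) by simp
  then have "odd (?n - 1)"
    using alt[OF last(1)] cell_adj_parity by blast
  then show ?thesis
    using n by simp
qed

lemma ham_cycle_translate:
  assumes "ham_cycle S vs"
  shows "ham_cycle ((+) v ` S) (map ((+) v) vs)"
proof -
  have "Suc i mod length vs < length vs" if "i < length vs" for i
    using that by (metis gr_implies_not0 mod_less_divisor not_gr0)
  then show ?thesis
    using assms unfolding ham_cycle_def by (simp add: distinct_map cell_adj_translate)
qed

lemma self_in_orbit_if_inj_on:
  assumes "finite A" "f ` A \<subseteq> A" "inj_on f A" "x \<in> A"
  shows "x \<in> orbit f x"
proof -
  have bij: "bij_betw f A A"
    using assms(1-3) by (simp add: bij_betw_def endo_inj_surj)
  have "bij_betw (perm_restrict f A) A A"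
    using bij bij_betw_cong[of A "perm_restrict f A" f A] by (simp add: perm_restrict_simps)
  then have "perm_restrict f A permutes A"
    by (rule bij_imp_permutes) (simp add: perm_restrict_simps)
  then have "x \<in> orbit (perm_restrict f A) x"
    using assms(1) by (intro permutation_self_in_orbit) (auto simp: permutation_permutes)
  moreover have "orbit (perm_restrict f A) x = orbit f x"
    using assms(2,4) by (intro orbit_cong0[of _ A]) (auto simp: perm_restrict_def)
  ultimately show ?thesis by simp
qed

lemma ham_cycle_orbit:
  assumes self: "x \<in> orbit f x" and adj: "\<And>y. y \<in> orbit f x \<Longrightarrow> cell_adj y (f y)"
    and "f (f x) \<noteq> x"
  shows "\<exists>vs. ham_cycle (orbit f x) vs"
proof -
  define n where "n = funpow_dist1 f x x"
  define vs where "vs = map (\<lambda>i. (f ^^ i) x) [0..<n]"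
  have period: "(f ^^ n) x = x"
    unfolding n_def using funpow_dist1_prop[OF self] .
  have set: "set vs = orbit f x"
    unfolding vs_def n_def orbit_conv_funpow_dist1[OF self] by (simp only: set_map set_upt)
  have distinct: "distinct vs"
    unfolding vs_def n_def using inj_on_funpow_dist1[OF self]
    by (simp only: distinct_map distinct_upt set_upt)
  have fx: "f x \<in> orbit f x" and ffx: "f (f x) \<in> orbit f x"
    by (auto intro: orbit.intros)
  have "x \<noteq> f x" "f x \<noteq> f (f x)"
    using adj[OF self] adj[OF fx] cell_adj_irrefl by metis+
  then have "card {x, f x, f (f x)} = 3"
    using assms(3) by auto
  moreover have "card {x, f x, f (f x)} \<le> card (orbit f x)"
    using self fx ffx by (intro card_mono finite_orbit) auto
  ultimately have three: "3 \<le> length vs"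
    using distinct_card[OF distinct] set by simp
  have "cell_adj (vs ! i) (vs ! (Suc i mod length vs))" if "i < length vs" for i
  proof -
    have "vs ! (Suc i mod n) = (f ^^ Suc i) x"
      using that period unfolding vs_def by (cases "Suc i = n") auto
    moreover have "(f ^^ i) x \<in> orbit f x"
      using self by (rule funpow_in_orbit)
    ultimately show ?thesis
      using that adj unfolding vs_def by simp
  qed
  then show ?thesis
    using set distinct three unfolding ham_cycle_def by blast
qed

section \<open>Blow-ups and their boundary layers\<close>

definition block :: "cell \<Rightarrow> int \<times> int" where
  "block c = (fst c div 2, snd c div 2)"

definition blowup :: "(int \<times> int) set \<Rightarrow> cell set" where
  "blowup S = block -` S"

definition cell_near :: "cell \<Rightarrow> cell \<Rightarrow> bool" where
  "cell_near c d \<longleftrightarrow> \<bar>fst c - fst d\<bar> \<le> 1 \<and> \<bar>snd c - snd d\<bar> \<le> 1"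

definition layer :: "cell set \<Rightarrow> cell set" where
  "layer A = {c \<in> A. \<exists>d. d \<notin> A \<and> cell_near c d}"

text \<open>The four blocks \<open>around v\<close> meet at the point \<open>2 * v\<close> of the plane, and
  \<open>2 * nearest_corner c\<close> is the corner of the cell \<open>c\<close> at which its block meets others.\<close>

definition nearest_corner :: "cell \<Rightarrow> int \<times> int" where
  "nearest_corner c = ((fst c + 1) div 2, (snd c + 1) div 2)"

definition around :: "int \<times> int \<Rightarrow> (int \<times> int) set" where
  "around v = {(fst v - 1, snd v - 1), (fst v, snd v - 1), (fst v - 1, snd v), v}"

lemma mem_blowup: "c \<in> blowup S \<longleftrightarrow> block c \<in> S"
  unfolding blowup_def by simp

lemma blowup_Compl: "blowup (- S) = - blowup S"
  unfolding blowup_def by (rule vimage_Compl)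

lemma layer_subset: "layer A \<subseteq> A"
  unfolding layer_def by blast

lemma finite_layer_Compl:
  assumes "finite A"
  shows "finite (layer (- A))"
proof (rule finite_subset)
  show "layer (- A) \<subseteq> (\<Union>d\<in>A. {fst d - 1 .. fst d + 1} \<times> {snd d - 1 .. snd d + 1})"
    unfolding layer_def cell_near_def by (force simp: mem_Times_iff abs_le_iff)
  show "finite (\<Union>d\<in>A. {fst d - 1 .. fst d + 1} \<times> {snd d - 1 .. snd d + 1})"
    using assms by simp
qed

lemma layer_nonempty:
  assumes "finite A" "A \<noteq> {}"
  shows "layer A \<noteq> {}" and "layer (- A) \<noteq> {}"
proof -
  have "Max (fst ` A) \<in> fst ` A"
    using assms by (intro Max_in) auto
  then obtain c where c: "c \<in> A" "fst c = Max (fst ` A)"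
    by force
  have "(fst c + 1, snd c) \<notin> A"
    using Max_ge[of "fst ` A" "fst c + 1"] assms(1) c(2) by force
  moreover have "cell_near c (fst c + 1, snd c)" "cell_near (fst c + 1, snd c) c"
    unfolding cell_near_def by simp_all
  ultimately show "layer A \<noteq> {}" "layer (- A) \<noteq> {}"
    using c(1) unfolding layer_def by blast+
qed

lemma mem_image_plus_iff: "(c :: 'a :: ab_group_add) \<in> (+) v ` A \<longleftrightarrow> c - v \<in> A"
  by (metis add.commute diff_add_cancel add_diff_cancel_right' image_iff)

lemma Compl_translate: "- ((+) v ` A) = (+) v ` (- A :: cell set)"
  by (auto simp: mem_image_plus_iff)

lemma layer_translate: "layer ((+) v ` A) = (+) v ` layer A"
proof (intro set_eqI iffI)
  fix c
  assume "c \<in> layer ((+) v ` A)"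
  then obtain d where "c - v \<in> A" "d - v \<notin> A" "cell_near c d"
    unfolding layer_def mem_image_plus_iff by blast
  then have "c - v \<in> layer A"
    unfolding layer_def cell_near_def by (intro CollectI conjI exI[of _ "d - v"]) auto
  then show "c \<in> (+) v ` layer A"
    unfolding mem_image_plus_iff .
next
  fix c
  assume "c \<in> (+) v ` layer A"
  then obtain d where "c - v \<in> A" "d \<notin> A" "cell_near (c - v) d"
    unfolding layer_def mem_image_plus_iff by blast
  then show "c \<in> layer ((+) v ` A)"
    unfolding layer_def cell_near_def mem_image_plus_iff by (intro CollectI conjI exI[of _ "v + d"]) auto
qed

lemma block_near_mem_around:
  assumes "cell_near c d"
  shows "block d \<in> around (nearest_corner c)"
proof -
  have half: "y div 2 = (x + 1) div 2 - 1 \<or> y div 2 = (x + 1) div 2" if "\<bar>x - y\<bar> \<le> 1" for x y :: int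
    using that by presburger
  show ?thesis
    using assms half[of "fst c" "fst d"] half[of "snd c" "snd d"]
    unfolding cell_near_def block_def around_def nearest_corner_def by auto
qed

lemma around_nearest_corner_near:
  assumes "X \<in> around (nearest_corner c)"
  obtains d where "cell_near c d" "block d = X"
proof -
  have half: "x = 2 * ((x + 1) div 2) - 1 \<or> x = 2 * ((x + 1) div 2)" for x :: int
    by presburger
  define d where "d = (2 * fst X + (if fst X < fst (nearest_corner c) then 1 else 0),
                       2 * snd X + (if snd X < snd (nearest_corner c) then 1 else 0))"
  have "cell_near c d" "block d = X"
    using assms half[of "fst c"] half[of "snd c"]
    unfolding d_def cell_near_def block_def around_def nearest_corner_def by auto
  then show ?thesis by (rule that)
qed

lemma mem_layer_blowup_iff:
  "c \<in> layer (blowup S) \<longleftrightarrow> block c \<in> S \<and> \<not> around (nearest_corner c) \<subseteq> S"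
proof
  assume "c \<in> layer (blowup S)"
  then show "block c \<in> S \<and> \<not> around (nearest_corner c) \<subseteq> S"
    unfolding layer_def blowup_def using block_near_mem_around by blast
next
  assume c: "block c \<in> S \<and> \<not> around (nearest_corner c) \<subseteq> S"
  then obtain X where "X \<in> around (nearest_corner c)" "X \<notin> S" by blast
  then obtain d where "cell_near c d" "block d \<notin> S"
    using around_nearest_corner_near by metis
  with c show "c \<in> layer (blowup S)"
    unfolding layer_def blowup_def by blast
qed

definition circ :: "cell \<Rightarrow> cell" where
  "circ c = (if even (fst c) then (if even (snd c) then (fst c, snd c + 1) else (fst c + 1, snd c))
             else (if even (snd c) then (fst c - 1, snd c) else (fst c, snd c - 1)))"

definition cross :: "cell \<Rightarrow> cell" where
  "cross c = (if even (fst c) then (if even (snd c) then (fst c - 1, snd c) else (fst c, snd c + 1))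
              else (if even (snd c) then (fst c, snd c - 1) else (fst c + 1, snd c)))"

definition circ_inv :: "cell \<Rightarrow> cell" where
  "circ_inv c = (if even (fst c) then (if even (snd c) then (fst c + 1, snd c) else (fst c, snd c - 1))
                 else (if even (snd c) then (fst c, snd c + 1) else (fst c - 1, snd c)))"

definition cross_inv :: "cell \<Rightarrow> cell" where
  "cross_inv c = (if even (fst c) then (if even (snd c) then (fst c, snd c - 1) else (fst c - 1, snd c))
                  else (if even (snd c) then (fst c + 1, snd c) else (fst c, snd c + 1)))"

text \<open>\<open>circ\<close> moves a cell clockwise around its 2x2 block and \<open>cross\<close> moves it to the
  neighbouring block on its left.  Thus \<open>boundary_step S\<close> walks clockwise along the boundary of
  \<open>blowup S\<close> with the complement on its left, turning left whenever it can.\<close>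

definition boundary_step :: "(int \<times> int) set \<Rightarrow> cell \<Rightarrow> cell" where
  "boundary_step S c = (if cross c \<in> blowup S then cross c else circ c)"

definition boundary_step_inv :: "(int \<times> int) set \<Rightarrow> cell \<Rightarrow> cell" where
  "boundary_step_inv S c = (if cross_inv c \<in> blowup S then cross_inv c else circ_inv c)"

lemma cell_parity_cases:
  fixes c :: cell
  obtains m n where "c = (2*m, 2*n)" | m n where "c = (2*m + 1, 2*n)"
    | m n where "c = (2*m, 2*n + 1)" | m n where "c = (2*m + 1, 2*n + 1)"
proof -
  have "\<exists>m. x = 2*m \<or> x = 2*m + 1" for x :: int
    by presburger
  then show ?thesis
    using that by (metis prod.collapse)
qed

lemma div2_simps [simp]:
  "(2*m - 1 :: int) div 2 = m - 1" "(2*m - 2 :: int) div 2 = m - 1"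
  "(2*m + 2 :: int) div 2 = m + 1" "(2*m + 3 :: int) div 2 = m + 1"
  by simp_all

lemmas boundary_step_simps = boundary_step_def boundary_step_inv_def cross_def circ_def
  cross_inv_def circ_inv_def mem_blowup block_def around_def nearest_corner_def

lemma boundary_step_inv_step: "block c \<in> S \<Longrightarrow> boundary_step_inv S (boundary_step S c) = c"
  by (cases c rule: cell_parity_cases) (auto simp: boundary_step_simps add.commute)

lemma boundary_step_in_layer: "c \<in> layer (blowup S) \<Longrightarrow> boundary_step S c \<in> layer (blowup S)"
  unfolding mem_layer_blowup_iff
  by (cases c rule: cell_parity_cases) (auto simp: boundary_step_simps add.commute)

lemma cross_thrice_notin_blowup:
  "c \<in> layer (blowup S) \<Longrightarrow> cross c \<in> blowup S \<Longrightarrow> cross (cross c) \<in> blowup S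
    \<Longrightarrow> cross (cross (cross c)) \<notin> blowup S"
  unfolding mem_layer_blowup_iff
  by (cases c rule: cell_parity_cases) (auto simp: boundary_step_simps add.commute)

lemma boundary_step_adj: "cell_adj c (boundary_step S c)"
  by (cases c rule: cell_parity_cases) (auto simp: boundary_step_simps cell_adj_def)

lemma boundary_step_twice_neq: "boundary_step S (boundary_step S c) \<noteq> c"
  by (cases c rule: cell_parity_cases) (auto simp: boundary_step_simps add.commute)

lemma boundary_step_eqs:
  "boundary_step S (2*m, 2*n) = (if (m - 1, n) \<in> S then (2*m - 1, 2*n) else (2*m, 2*n + 1))"
  "boundary_step S (2*m + 1, 2*n) = (if (m, n - 1) \<in> S then (2*m + 1, 2*n - 1) else (2*m, 2*n))"
  "boundary_step S (2*m, 2*n + 1) = (if (m, n + 1) \<in> S then (2*m, 2*n + 2) else (2*m + 1, 2*n + 1))"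
  "boundary_step S (2*m + 1, 2*n + 1) = (if (m + 1, n) \<in> S then (2*m + 2, 2*n + 1) else (2*m + 1, 2*n))"
  "boundary_step S (2*m + 2, 2*n) = (if (m, n) \<in> S then (2*m + 1, 2*n) else (2*m + 2, 2*n + 1))"
  "boundary_step S (2*m + 2, 2*n + 1) = (if (m + 1, n + 1) \<in> S then (2*m + 2, 2*n + 2) else (2*m + 3, 2*n + 1))"
  "boundary_step S (2*m, 2*n + 2) = (if (m - 1, n + 1) \<in> S then (2*m - 1, 2*n + 2) else (2*m, 2*n + 3))"
  "boundary_step S (2*m + 1, 2*n + 2) = (if (m, n) \<in> S then (2*m + 1, 2*n + 1) else (2*m, 2*n + 2))"
  by (simp_all add: boundary_step_simps add.commute)

section \<open>Winding parity and the boundary cycle\<close>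

definition vcross_ray :: "(cell \<Rightarrow> cell) \<Rightarrow> cell set \<Rightarrow> int \<Rightarrow> int \<Rightarrow> cell set" where
  "vcross_ray f T a b = {c \<in> T. a \<le> fst c \<and> fst (f c) = fst c \<and>
     ((snd c = b - 1 \<and> snd (f c) = b) \<or> (snd c = b \<and> snd (f c) = b - 1))}"

definition vcross_at :: "(cell \<Rightarrow> cell) \<Rightarrow> cell set \<Rightarrow> int \<Rightarrow> int \<Rightarrow> cell set" where
  "vcross_at f T a b = {c \<in> T. fst c = a \<and> fst (f c) = a \<and>
     ((snd c = b - 1 \<and> snd (f c) = b) \<or> (snd c = b \<and> snd (f c) = b - 1))}"

definition hcross_at :: "(cell \<Rightarrow> cell) \<Rightarrow> cell set \<Rightarrow> int \<Rightarrow> int \<Rightarrow> cell set" where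
  "hcross_at f T a b = {c \<in> T. snd c = b \<and> snd (f c) = b \<and>
     ((fst c = a - 1 \<and> fst (f c) = a) \<or> (fst c = a \<and> fst (f c) = a - 1))}"

lemma card_vcross_ray_Suc:
  assumes "finite T" "a' = a + 1"
  shows "card (vcross_ray f T a b) = card (vcross_ray f T a' b) + card (vcross_at f T a b)"
proof -
  have "vcross_ray f T a b = vcross_ray f T a' b \<union> vcross_at f T a b"
    "vcross_ray f T a' b \<inter> vcross_at f T a b = {}"
    using assms(2) unfolding vcross_ray_def vcross_at_def by auto
  moreover have "finite (vcross_ray f T a' b)" "finite (vcross_at f T a b)"
    using assms unfolding vcross_ray_def vcross_at_def by auto
  ultimately show ?thesis
    by (simp add: card_Un_disjoint)
qed

lemma even_card_crossing_steps:
  assumes "finite T" "f ` T \<subseteq> T" "inj_on f T"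
  shows "even (card {c \<in> T. (c \<in> R) \<noteq> (f c \<in> R)})"
proof -
  let ?In = "{c \<in> T. c \<notin> R \<and> f c \<in> R}" and ?Out = "{c \<in> T. c \<in> R \<and> f c \<notin> R}"
    and ?Stay = "{c \<in> T. c \<in> R \<and> f c \<in> R}"
  have "f ` {c \<in> T. f c \<in> R} = T \<inter> R"
    using endo_inj_surj[OF assms] by auto
  then have "card {c \<in> T. f c \<in> R} = card (T \<inter> R)"
    by (metis (no_types, lifting) assms(3) card_image inj_on_subset mem_Collect_eq subsetI)
  moreover have "{c \<in> T. f c \<in> R} = ?Stay \<union> ?In" "T \<inter> R = ?Stay \<union> ?Out"
    by auto
  ultimately have "card ?In = card ?Out"
    using assms(1) by (simp add: card_Un_disjoint disjoint_iff)
  moreover have "{c \<in> T. (c \<in> R) \<noteq> (f c \<in> R)} = ?In \<union> ?Out"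
    by auto
  ultimately show ?thesis
    using assms(1) by (simp add: card_Un_disjoint disjoint_iff)
qed

lemma even_card_vcross_ray_hcross_at:
  assumes fin: "finite T" and "f ` T \<subseteq> T" "inj_on f T" and adj: "\<And>c. c \<in> T \<Longrightarrow> cell_adj c (f c)"
    and b': "b' = b + 1"
  shows "even (card (vcross_ray f T a b) + card (vcross_ray f T a b') + card (hcross_at f T a b))"
proof -
  let ?R = "{c :: cell. snd c = b \<and> a \<le> fst c}"
  have "{c \<in> T. (c \<in> ?R) \<noteq> (f c \<in> ?R)} = vcross_ray f T a b \<union> vcross_ray f T a b' \<union> hcross_at f T a b"
  proof (rule set_eqI)
    fix c
    show "c \<in> {c \<in> T. (c \<in> ?R) \<noteq> (f c \<in> ?R)} \<longleftrightarrow>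
        c \<in> vcross_ray f T a b \<union> vcross_ray f T a b' \<union> hcross_at f T a b"
    proof (cases "c \<in> T")
      case True
      then have "f c = (fst c + 1, snd c) \<or> f c = (fst c - 1, snd c) \<or>
          f c = (fst c, snd c + 1) \<or> f c = (fst c, snd c - 1)"
        using adj cell_adj_iff by blast
      with True show ?thesis
        unfolding vcross_ray_def hcross_at_def b' by (elim disjE) auto
    qed (simp add: vcross_ray_def hcross_at_def)
  qed
  moreover have "finite (vcross_ray f T a b)" "finite (vcross_ray f T a b')" "finite (hcross_at f T a b)"
    using fin unfolding vcross_ray_def hcross_at_def by auto
  moreover have "vcross_ray f T a b \<inter> vcross_ray f T a b' = {}"
    "(vcross_ray f T a b \<union> vcross_ray f T a b') \<inter> hcross_at f T a b = {}"
    unfolding vcross_ray_def hcross_at_def b' by auto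
  ultimately show ?thesis
    using even_card_crossing_steps[OF assms(1-3), of ?R] by (simp add: card_Un_disjoint)
qed

lemma vcross_at_boundary_step_right:
  "vcross_at (boundary_step S) T (2*A + 1) (2*B + 1) =
     (if (2*A + 1, 2*B + 1) \<in> T \<and> (A + 1, B) \<notin> S then {(2*A + 1, 2*B + 1)} else {})"
proof (rule set_eqI)
  fix c :: cell
  obtain u v where c: "c = (u, v)" by fastforce
  show "c \<in> vcross_at (boundary_step S) T (2*A + 1) (2*B + 1) \<longleftrightarrow>
      c \<in> (if (2*A + 1, 2*B + 1) \<in> T \<and> (A + 1, B) \<notin> S then {(2*A + 1, 2*B + 1)} else {})"
  proof (cases "u = 2*A + 1 \<and> (v = 2*B \<or> v = 2*B + 1)")
    case True
    then show ?thesis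
      unfolding c vcross_at_def by (auto simp: boundary_step_eqs split: if_splits)
  qed (auto simp: c vcross_at_def)
qed

lemma vcross_at_boundary_step_left:
  "vcross_at (boundary_step S) T (2*A + 2) (2*B + 1) =
     (if (2*A + 2, 2*B) \<in> T \<and> (A, B) \<notin> S then {(2*A + 2, 2*B)} else {})"
proof (rule set_eqI)
  fix c :: cell
  obtain u v where c: "c = (u, v)" by fastforce
  show "c \<in> vcross_at (boundary_step S) T (2*A + 2) (2*B + 1) \<longleftrightarrow>
      c \<in> (if (2*A + 2, 2*B) \<in> T \<and> (A, B) \<notin> S then {(2*A + 2, 2*B)} else {})"
  proof (cases "u = 2*A + 2 \<and> (v = 2*B \<or> v = 2*B + 1)")
    case True
    then show ?thesis
      unfolding c vcross_at_def by (auto simp: boundary_step_eqs split: if_splits)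
  qed (auto simp: c vcross_at_def)
qed

lemma hcross_at_boundary_step_lower:
  "hcross_at (boundary_step S) T (2*A + 1) (2*B + 1) =
     (if (2*A, 2*B + 1) \<in> T \<and> (A, B + 1) \<notin> S then {(2*A, 2*B + 1)} else {})"
proof (rule set_eqI)
  fix c :: cell
  obtain u v where c: "c = (u, v)" by fastforce
  show "c \<in> hcross_at (boundary_step S) T (2*A + 1) (2*B + 1) \<longleftrightarrow>
      c \<in> (if (2*A, 2*B + 1) \<in> T \<and> (A, B + 1) \<notin> S then {(2*A, 2*B + 1)} else {})"
  proof (cases "v = 2*B + 1 \<and> (u = 2*A \<or> u = 2*A + 1)")
    case True
    then show ?thesis
      unfolding c hcross_at_def by (auto simp: boundary_step_eqs split: if_splits)
  qed (auto simp: c hcross_at_def)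
qed

lemma hcross_at_boundary_step_upper:
  "hcross_at (boundary_step S) T (2*A + 1) (2*B + 2) =
     (if (2*A + 1, 2*B + 2) \<in> T \<and> (A, B) \<notin> S then {(2*A + 1, 2*B + 2)} else {})"
proof (rule set_eqI)
  fix c :: cell
  obtain u v where c: "c = (u, v)" by fastforce
  show "c \<in> hcross_at (boundary_step S) T (2*A + 1) (2*B + 2) \<longleftrightarrow>
      c \<in> (if (2*A + 1, 2*B + 2) \<in> T \<and> (A, B) \<notin> S then {(2*A + 1, 2*B + 2)} else {})"
  proof (cases "v = 2*B + 2 \<and> (u = 2*A \<or> u = 2*A + 1)")
    case True
    then show ?thesis
      unfolding c hcross_at_def by (auto simp: boundary_step_eqs split: if_splits)
  qed (auto simp: c hcross_at_def)
qed

text \<open>The parity of the number of steps of \<open>T\<close> crossing the horizontal ray that starts at the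
  centre of block \<open>X\<close> and runs to the right, i.e. the winding number of \<open>T\<close> around that
  centre modulo 2.\<close>

definition winding_even :: "(int \<times> int) set \<Rightarrow> cell set \<Rightarrow> int \<times> int \<Rightarrow> bool" where
  "winding_even S T X \<longleftrightarrow>
     even (card (vcross_ray (boundary_step S) T (2 * fst X + 1) (2 * snd X + 1)))"

locale boundary_cycles =
  fixes S :: "(int \<times> int) set" and T :: "cell set"
  assumes finite: "finite T" and subset_layer: "T \<subseteq> layer (blowup S)"
    and inj: "inj_on (boundary_step S) T" and closed: "boundary_step S ` T \<subseteq> T"
begin

lemma block_mem: "c \<in> T \<Longrightarrow> block c \<in> S"
  using subset_layer layer_subset mem_blowup by blast

lemma winding_even_right:
  "winding_even S T (A, B) \<noteq> winding_even S T (A + 1, B) \<longleftrightarrow>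
     ((2*A + 1, 2*B + 1) \<in> T \<and> (A + 1, B) \<notin> S) \<or> ((2*A + 2, 2*B) \<in> T \<and> (A, B) \<notin> S)"
proof -
  define N where "N a = card (vcross_ray (boundary_step S) T a (2*B + 1))" for a
  define a1 a2 a3 where "a1 = 2*A + 1" and "a2 = 2*A + 2" and "a3 = 2*(A + 1) + 1"
  have "N a1 = N a2 + card (vcross_at (boundary_step S) T (2*A + 1) (2*B + 1))"
    "N a2 = N a3 + card (vcross_at (boundary_step S) T (2*A + 2) (2*B + 1))"
    unfolding N_def a1_def a2_def a3_def by (rule card_vcross_ray_Suc[OF finite], simp)+
  moreover have "card (vcross_at (boundary_step S) T (2*A + 1) (2*B + 1)) =
      (if (2*A + 1, 2*B + 1) \<in> T \<and> (A + 1, B) \<notin> S then 1 else 0)"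
    "card (vcross_at (boundary_step S) T (2*A + 2) (2*B + 1)) =
      (if (2*A + 2, 2*B) \<in> T \<and> (A, B) \<notin> S then 1 else 0)"
    unfolding vcross_at_boundary_step_right vcross_at_boundary_step_left by simp_all
  moreover have "(2*A + 1, 2*B + 1) \<in> T \<Longrightarrow> (A, B) \<in> S" "(2*A + 2, 2*B) \<in> T \<Longrightarrow> (A + 1, B) \<in> S"
    using block_mem[of "(2*A + 1, 2*B + 1)"] block_mem[of "(2*A + 2, 2*B)"]
    by (simp_all add: block_def)
  moreover have "winding_even S T (A, B) = even (N a1)" "winding_even S T (A + 1, B) = even (N a3)"
    unfolding winding_even_def N_def a1_def a3_def by simp_all
  ultimately show ?thesis
    by (auto split: if_splits)
qed

lemma winding_even_up:
  "winding_even S T (A, B) \<noteq> winding_even S T (A, B + 1) \<longleftrightarrow>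
     ((2*A, 2*B + 1) \<in> T \<and> (A, B + 1) \<notin> S) \<or> ((2*A + 1, 2*B + 2) \<in> T \<and> (A, B) \<notin> S)"
proof -
  define N where "N b = card (vcross_ray (boundary_step S) T (2*A + 1) b)" for b
  define b1 b2 b3 where "b1 = 2*B + 1" and "b2 = 2*B + 2" and "b3 = 2*(B + 1) + 1"
  have adj: "\<And>c. c \<in> T \<Longrightarrow> cell_adj c (boundary_step S c)"
    by (rule boundary_step_adj)
  have "even (N b1 + N b2 + card (hcross_at (boundary_step S) T (2*A + 1) (2*B + 1)))"
    unfolding N_def b1_def b2_def by (rule even_card_vcross_ray_hcross_at[OF finite closed inj adj]) simp_all
  moreover have "even (N b2 + N b3 + card (hcross_at (boundary_step S) T (2*A + 1) (2*B + 2)))"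
    unfolding N_def b2_def b3_def by (rule even_card_vcross_ray_hcross_at[OF finite closed inj adj]) simp_all
  moreover have "card (hcross_at (boundary_step S) T (2*A + 1) (2*B + 1)) =
      (if (2*A, 2*B + 1) \<in> T \<and> (A, B + 1) \<notin> S then 1 else 0)"
    "card (hcross_at (boundary_step S) T (2*A + 1) (2*B + 2)) =
      (if (2*A + 1, 2*B + 2) \<in> T \<and> (A, B) \<notin> S then 1 else 0)"
    unfolding hcross_at_boundary_step_lower hcross_at_boundary_step_upper by simp_all
  moreover have "(2*A, 2*B + 1) \<in> T \<Longrightarrow> (A, B) \<in> S" "(2*A + 1, 2*B + 2) \<in> T \<Longrightarrow> (A, B + 1) \<in> S"
    using block_mem[of "(2*A, 2*B + 1)"] block_mem[of "(2*A + 1, 2*B + 2)"]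
    by (simp_all add: block_def)
  moreover have "winding_even S T (A, B) = even (N b1)" "winding_even S T (A, B + 1) = even (N b3)"
    unfolding winding_even_def N_def b1_def b3_def by simp_all
  ultimately show ?thesis
    by (auto split: if_splits)
qed

lemma winding_even_adj:
  assumes "cell_adj X Y" "X \<in> S \<longleftrightarrow> Y \<in> S"
  shows "winding_even S T X = winding_even S T Y"
proof -
  have right: "winding_even S T (A, B) = winding_even S T (A + 1, B)"
    if "(A, B) \<in> S \<longleftrightarrow> (A + 1, B) \<in> S" for A B
    using that winding_even_right[of A B] block_mem[of "(2*A + 1, 2*B + 1)"]
      block_mem[of "(2*A + 2, 2*B)"] by (auto simp: block_def)
  have up: "winding_even S T (A, B) = winding_even S T (A, B + 1)"
    if "(A, B) \<in> S \<longleftrightarrow> (A, B + 1) \<in> S" for A B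
    using that winding_even_up[of A B] block_mem[of "(2*A, 2*B + 1)"]
      block_mem[of "(2*A + 1, 2*B + 2)"] by (auto simp: block_def)
  obtain A B where X: "X = (A, B)"
    by fastforce
  then consider "Y = (A + 1, B)" | "Y = (A - 1, B)" | "Y = (A, B + 1)" | "Y = (A, B - 1)"
    using assms(1) unfolding cell_adj_iff by auto
  then show ?thesis
    using assms(2) right[of A B] right[of "A - 1" B] up[of A B] up[of A "B - 1"] X
    by cases auto
qed

lemma winding_even_const:
  assumes "graph_connected R" "R = S \<or> R = - S" "X \<in> R" "Y \<in> R"
  shows "winding_even S T X = winding_even S T Y"
proof -
  have "(\<lambda>u v. u \<in> R \<and> v \<in> R \<and> cell_adj u v)\<^sup>*\<^sup>* X Y"
    using assms(1,3,4) unfolding graph_connected_def by blast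
  then show ?thesis
  proof (induction rule: rtranclp_induct)
    case (step Y Z)
    then show ?case
      using winding_even_adj[of Y Z] assms(2) by auto
  qed simp
qed

lemma mem_iff_winding_even_cross:
  assumes c: "c \<in> layer (blowup S)" and exit: "cross c \<notin> blowup S"
  shows "c \<in> T \<longleftrightarrow> winding_even S T (block c) \<noteq> winding_even S T (block (cross c))"
proof -
  have "block c \<in> S"
    using c layer_subset mem_blowup by blast
  with exit show ?thesis
  proof (cases c rule: cell_parity_cases)
    case (1 m n)
    have "winding_even S T (m, n) \<noteq> winding_even S T (m - 1, n) \<longleftrightarrow>
        ((2*m - 1, 2*n + 1) \<in> T \<and> (m, n) \<notin> S) \<or> ((2*m, 2*n) \<in> T \<and> (m - 1, n) \<notin> S)"
      using winding_even_right[of "m - 1" n] by (auto simp: algebra_simps)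
    with 1 show ?thesis
      using exit \<open>block c \<in> S\<close> by (simp add: cross_def block_def mem_blowup)
  next
    case (2 m n)
    have "winding_even S T (m, n) \<noteq> winding_even S T (m, n - 1) \<longleftrightarrow>
        ((2*m, 2*n - 1) \<in> T \<and> (m, n) \<notin> S) \<or> ((2*m + 1, 2*n) \<in> T \<and> (m, n - 1) \<notin> S)"
      using winding_even_up[of m "n - 1"] by (auto simp: algebra_simps)
    with 2 show ?thesis
      using exit \<open>block c \<in> S\<close> by (simp add: cross_def block_def mem_blowup)
  next
    case (3 m n)
    with exit \<open>block c \<in> S\<close> show ?thesis
      using winding_even_up[of m n] by (simp add: cross_def block_def mem_blowup add.commute)
  next
    case (4 m n)
    with exit \<open>block c \<in> S\<close> show ?thesis
      using winding_even_right[of m n] by (simp add: cross_def block_def mem_blowup add.commute)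
  qed
qed

lemma exit_mem:
  assumes S: "graph_connected S" and not_S: "graph_connected (- S)"
    and e: "e \<in> T" "cross e \<notin> blowup S"
    and d: "d \<in> layer (blowup S)" "cross d \<notin> blowup S"
  shows "d \<in> T"
proof -
  have e_layer: "e \<in> layer (blowup S)"
    using e(1) subset_layer by blast
  have exit_block: "block c \<in> S" "block (cross c) \<in> - S"
    if "c \<in> layer (blowup S)" "cross c \<notin> blowup S" for c
    using that layer_subset mem_blowup by blast+
  have "winding_even S T (block e) \<noteq> winding_even S T (block (cross e))"
    using mem_iff_winding_even_cross[OF e_layer e(2)] e(1) by blast
  moreover have "winding_even S T (block d) = winding_even S T (block e)"
    using winding_even_const[OF S _ exit_block(1)[OF d] exit_block(1)[OF e_layer e(2)]] by blast
  moreover have "winding_even S T (block (cross d)) = winding_even S T (block (cross e))"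
    using winding_even_const[OF not_S _ exit_block(2)[OF d] exit_block(2)[OF e_layer e(2)]] by blast
  ultimately show ?thesis
    using mem_iff_winding_even_cross[OF d] by simp
qed

end

lemma boundary_step_reaches_exit:
  assumes c: "c \<in> layer (blowup S)"
  obtains k where "(boundary_step S ^^ k) c \<in> layer (blowup S)"
    "cross ((boundary_step S ^^ k) c) \<notin> blowup S"
proof -
  have turn: "boundary_step S d = cross d" if "cross d \<in> blowup S" for d
    using that by (simp add: boundary_step_def)
  have c1: "boundary_step S c \<in> layer (blowup S)" and c2: "boundary_step S (boundary_step S c) \<in> layer (blowup S)"
    using boundary_step_in_layer c by blast+
  consider "cross c \<notin> blowup S" | "cross c \<in> blowup S" "cross (cross c) \<notin> blowup S"
    | "cross c \<in> blowup S" "cross (cross c) \<in> blowup S" "cross (cross (cross c)) \<notin> blowup S"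
    using cross_thrice_notin_blowup[OF c] by blast
  then show ?thesis
  proof cases
    case 1
    then show ?thesis
      using that[of 0] c by simp
  next
    case 2
    then show ?thesis
      using that[of 1] c1 turn[of c] by simp
  next
    case 3
    then show ?thesis
      using that[of 2] c2 turn[of c] turn[of "cross c"] by (simp add: numeral_2_eq_2)
  qed
qed

theorem orbit_boundary_step_eq_layer:
  assumes S: "graph_connected S" and not_S: "graph_connected (- S)"
    and fin: "finite (layer (blowup S))" and c: "c \<in> layer (blowup S)"
  shows "orbit (boundary_step S) c = layer (blowup S)"
proof -
  let ?f = "boundary_step S" and ?L = "layer (blowup S)"
  have closed: "?f ` ?L \<subseteq> ?L"
    using boundary_step_in_layer by blast
  have inj: "inj_on ?f ?L"
    by (rule inj_on_inverseI[where g = "boundary_step_inv S"])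
      (use layer_subset mem_blowup boundary_step_inv_step in blast)
  have self: "d \<in> orbit ?f d" if "d \<in> ?L" for d
    using self_in_orbit_if_inj_on[OF fin closed inj that] .
  have sub: "orbit ?f c \<subseteq> ?L"
  proof
    fix d
    assume "d \<in> orbit ?f c"
    then show "d \<in> ?L"
      by induction (use c closed in auto)
  qed
  interpret boundary_cycles S "orbit ?f c"
    by unfold_locales
      (use finite_subset[OF sub fin] sub inj_on_subset[OF inj sub] in \<open>auto intro: orbit.step\<close>)
  obtain k where k: "(?f ^^ k) c \<in> ?L" "cross ((?f ^^ k) c) \<notin> blowup S"
    using boundary_step_reaches_exit[OF c] .
  have exit_c: "(?f ^^ k) c \<in> orbit ?f c"
    using self[OF c] by (rule funpow_in_orbit)
  have "d \<in> orbit ?f c" if d: "d \<in> ?L" for d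
  proof -
    obtain j where j: "(?f ^^ j) d \<in> ?L" "cross ((?f ^^ j) d) \<notin> blowup S"
      using boundary_step_reaches_exit[OF d] .
    have "d \<in> orbit ?f ((?f ^^ j) d)"
      using orbit_swap[OF self[OF d] funpow_in_orbit[OF self[OF d]]] .
    moreover have "(?f ^^ j) d \<in> orbit ?f c"
      using exit_mem[OF S not_S exit_c k(2) j] .
    ultimately show ?thesis
      by (rule orbit_trans)
  qed
  with sub show ?thesis
    by blast
qed

theorem layer_ham_cycle:
  assumes "graph_connected S" "graph_connected (- S)" "finite (layer (blowup S))"
    and "layer (blowup S) \<noteq> {}"
  shows "\<exists>vs. ham_cycle (layer (blowup S)) vs"
proof -
  obtain c where c: "c \<in> layer (blowup S)"
    using assms(4) by blast
  have orbit: "orbit (boundary_step S) c = layer (blowup S)"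
    using orbit_boundary_step_eq_layer[OF assms(1-3) c] .
  have "\<exists>vs. ham_cycle (orbit (boundary_step S) c) vs"
    by (rule ham_cycle_orbit) (simp_all add: orbit c boundary_step_adj boundary_step_twice_neq)
  then show ?thesis
    unfolding orbit .
qed

section \<open>Polyominoes with consistent parity as blow-ups\<close>

lemma no_corner_vertical_step:
  assumes "(a, b + 1) \<notin> corners P" "(a - 1, b) \<in> P \<longleftrightarrow> (a, b) \<notin> P"
  shows "((a - 1, b + 1) \<in> P \<longleftrightarrow> (a - 1, b) \<in> P) \<and> ((a, b + 1) \<in> P \<longleftrightarrow> (a, b) \<in> P)"
  using assms unfolding corners_def
  by (cases "(a - 1, b + 1) \<in> P"; cases "(a, b + 1) \<in> P"; cases "(a - 1, b) \<in> P"; cases "(a, b) \<in> P")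
    (auto simp: Int_insert_left card_insert_if)

lemma no_corner_horizontal_step:
  assumes "(a + 1, b) \<notin> corners P" "(a, b - 1) \<in> P \<longleftrightarrow> (a, b) \<notin> P"
  shows "((a + 1, b - 1) \<in> P \<longleftrightarrow> (a, b - 1) \<in> P) \<and> ((a + 1, b) \<in> P \<longleftrightarrow> (a, b) \<in> P)"
  using assms unfolding corners_def
  by (cases "(a + 1, b - 1) \<in> P"; cases "(a + 1, b) \<in> P"; cases "(a, b - 1) \<in> P"; cases "(a, b) \<in> P")
    (auto simp: Int_insert_left card_insert_if)

lemma finite_not_superset_range:
  fixes f :: "nat \<Rightarrow> 'a"
  assumes "finite P" "inj f"
  obtains t where "f t \<notin> P"
  using assms finite_subset[of "range f" P] range_inj_infinite[of f] by blast

lemma cornerless_column: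
  assumes "finite P" and no_corner: "\<And>t. (a, t) \<notin> corners P"
  shows "(a - 1, b) \<in> P \<longleftrightarrow> (a, b) \<in> P"
proof (rule ccontr)
  assume differ: "\<not> ((a - 1, b) \<in> P \<longleftrightarrow> (a, b) \<in> P)"
  have "((a - 1, b + int t) \<in> P \<longleftrightarrow> (a - 1, b) \<in> P) \<and> ((a, b + int t) \<in> P \<longleftrightarrow> (a, b) \<in> P)" for t
  proof (induction t)
    case (Suc t)
    then have "(a - 1, b + int t) \<in> P \<longleftrightarrow> (a, b + int t) \<notin> P"
      using differ by blast
    from no_corner_vertical_step[OF no_corner this] Suc show ?case
      by (simp add: ac_simps)
  qed simp
  moreover obtain s where "(a - 1, b + int s) \<notin> P"
    using finite_not_superset_range[OF assms(1), of "\<lambda>t. (a - 1, b + int t)"] by (auto simp: inj_def)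
  moreover obtain t where "(a, b + int t) \<notin> P"
    using finite_not_superset_range[OF assms(1), of "\<lambda>t. (a, b + int t)"] by (auto simp: inj_def)
  ultimately show False
    using differ by blast
qed

lemma cornerless_row:
  assumes "finite P" and no_corner: "\<And>s. (s, b) \<notin> corners P"
  shows "(a, b - 1) \<in> P \<longleftrightarrow> (a, b) \<in> P"
proof (rule ccontr)
  assume differ: "\<not> ((a, b - 1) \<in> P \<longleftrightarrow> (a, b) \<in> P)"
  have "((a + int t, b - 1) \<in> P \<longleftrightarrow> (a, b - 1) \<in> P) \<and> ((a + int t, b) \<in> P \<longleftrightarrow> (a, b) \<in> P)" for t
  proof (induction t)
    case (Suc t)
    then have "(a + int t, b - 1) \<in> P \<longleftrightarrow> (a + int t, b) \<notin> P"
      using differ by blast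
    from no_corner_horizontal_step[OF no_corner this] Suc show ?case
      by (simp add: ac_simps)
  qed simp
  moreover obtain s where "(a + int s, b - 1) \<notin> P"
    using finite_not_superset_range[OF assms(1), of "\<lambda>t. (a + int t, b - 1)"] by (auto simp: inj_def)
  moreover obtain t where "(a + int t, b) \<notin> P"
    using finite_not_superset_range[OF assms(1), of "\<lambda>t. (a + int t, b)"] by (auto simp: inj_def)
  ultimately show False
    using differ by blast
qed

lemma consistent_parity_blowup:
  assumes fin: "finite P" and "consistent_parity P"
  obtains v Q where "P = (+) v ` blowup Q"
proof -
  obtain p q where p: "\<And>z. z \<in> corners P \<Longrightarrow> fst z mod 2 = p"
    and q: "\<And>z. z \<in> corners P \<Longrightarrow> snd z mod 2 = q"
    using assms(2) unfolding consistent_parity_def by blast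
  have col: "(x - 1, y) \<in> P \<longleftrightarrow> (x, y) \<in> P" if "x mod 2 \<noteq> p mod 2" for x y
    using cornerless_column[OF fin] p[of "(x, _)"] that by force
  have row: "(x, y - 1) \<in> P \<longleftrightarrow> (x, y) \<in> P" if "y mod 2 \<noteq> q mod 2" for x y
    using cornerless_row[OF fin] q[of "(_, y)"] that by force
  define v where "v = (p, q)"
  define Q where "Q = {X. v + (2 * fst X, 2 * snd X) \<in> P}"
  have "c \<in> P \<longleftrightarrow> c - v \<in> blowup Q" for c
  proof -
    obtain x y where c: "c = (x, y)"
      by fastforce
    define x0 y0 where "x0 = p + 2 * ((x - p) div 2)" and "y0 = q + 2 * ((y - q) div 2)"
    have "x = x0 \<or> x = x0 + 1 \<and> x mod 2 \<noteq> p mod 2" "y = y0 \<or> y = y0 + 1 \<and> y mod 2 \<noteq> q mod 2"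
      unfolding x0_def y0_def by presburger+
    then have "(x, y) \<in> P \<longleftrightarrow> (x0, y) \<in> P" "(x0, y) \<in> P \<longleftrightarrow> (x0, y0) \<in> P"
      using col[of x y] row[of y x0] by auto
    then show ?thesis
      unfolding c Q_def v_def x0_def y0_def by (simp add: mem_blowup block_def)
  qed
  then have "P = (+) v ` blowup Q"
    unfolding set_eq_iff mem_image_plus_iff by blast
  then show ?thesis
    by (rule that)
qed

lemma graph_connected_image:
  assumes conn: "graph_connected A"
    and adj: "\<And>c d. c \<in> A \<Longrightarrow> d \<in> A \<Longrightarrow> cell_adj c d \<Longrightarrow> g c = g d \<or> cell_adj (g c) (g d)"
  shows "graph_connected (g ` A)"
  unfolding graph_connected_def
proof (intro ballI)
  fix X Y
  assume "X \<in> g ` A" "Y \<in> g ` A"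
  then obtain c d where c: "c \<in> A" "X = g c" and d: "d \<in> A" "Y = g d"
    by blast
  have "(\<lambda>u v. u \<in> A \<and> v \<in> A \<and> cell_adj u v)\<^sup>*\<^sup>* c d"
    using conn c d unfolding graph_connected_def by blast
  then have "(\<lambda>u v. u \<in> g ` A \<and> v \<in> g ` A \<and> cell_adj u v)\<^sup>*\<^sup>* (g c) (g d)"
  proof (induction rule: rtranclp_induct)
    case (step y z)
    then show ?case
      using adj[of y z] by (auto intro: rtranclp.rtrancl_into_rtrancl)
  qed simp
  with c d show "(\<lambda>u v. u \<in> g ` A \<and> v \<in> g ` A \<and> cell_adj u v)\<^sup>*\<^sup>* X Y"
    by simp
qed

lemma cell_adj_block:
  assumes "cell_adj c d"
  shows "block c = block d \<or> cell_adj (block c) (block d)"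
proof -
  have up: "(x + 1) div 2 = x div 2 \<or> (x + 1) div 2 = x div 2 + 1"
    and down: "(x - 1) div 2 = x div 2 \<or> (x - 1) div 2 = x div 2 - 1" for x :: int
    by presburger+
  from assms consider "d = (fst c + 1, snd c)" | "d = (fst c - 1, snd c)"
    | "d = (fst c, snd c + 1)" | "d = (fst c, snd c - 1)"
    unfolding cell_adj_iff by blast
  then show ?thesis
  proof cases
    case 1
    then show ?thesis
      using up[of "fst c"] by (auto simp: block_def cell_adj_iff)
  next
    case 2
    then show ?thesis
      using down[of "fst c"] by (auto simp: block_def cell_adj_iff)
  next
    case 3
    then show ?thesis
      using up[of "snd c"] by (auto simp: block_def cell_adj_iff)
  next
    case 4
    then show ?thesis
      using down[of "snd c"] by (auto simp: block_def cell_adj_iff)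
  qed
qed

lemma image_block_blowup: "block ` blowup Q = Q"
proof -
  have "X = block (2 * fst X, 2 * snd X)" for X
    by (simp add: block_def)
  then have "Q \<subseteq> range block"
    by blast
  then show ?thesis
    unfolding blowup_def image_vimage_eq by blast
qed

lemma graph_connected_blocks:
  assumes "graph_connected ((+) v ` blowup Q)"
  shows "graph_connected Q"
proof -
  have "graph_connected ((\<lambda>c. block (c - v)) ` ((+) v ` blowup Q))"
  proof (rule graph_connected_image[OF assms])
    fix c d :: cell
    assume "cell_adj c d"
    then have "cell_adj (c - v) (d - v)"
      unfolding cell_adj_def by simp
    then show "block (c - v) = block (d - v) \<or> cell_adj (block (c - v)) (block (d - v))"
      by (rule cell_adj_block)
  qed
  then show ?thesis
    by (simp add: image_image image_block_blowup)
qed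

definition block_square :: "int \<times> int \<Rightarrow> int \<times> int \<Rightarrow> (real \<times> real) set" where
  "block_square v X =
     {of_int (fst v + 2 * fst X) .. of_int (fst v + 2 * fst X) + 2} \<times>
     {of_int (snd v + 2 * snd X) .. of_int (snd v + 2 * snd X) + 2}"

lemma cell_pts_subset_block_square: "cell_pts c \<subseteq> block_square v (block (c - v))"
proof
  fix z
  assume z: "z \<in> cell_pts c"
  define X where "X = block (c - v)"
  have "fst v + 2 * fst X \<le> fst c" "fst c + 1 \<le> fst v + 2 * fst X + 2"
    "snd v + 2 * snd X \<le> snd c" "snd c + 1 \<le> snd v + 2 * snd X + 2"
    unfolding X_def block_def by auto
  then have "real_of_int (fst v + 2 * fst X) \<le> real_of_int (fst c)"
    "real_of_int (fst c + 1) \<le> real_of_int (fst v + 2 * fst X + 2)"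
    "real_of_int (snd v + 2 * snd X) \<le> real_of_int (snd c)"
    "real_of_int (snd c + 1) \<le> real_of_int (snd v + 2 * snd X + 2)"
    by (simp_all only: of_int_le_iff)
  with z show "z \<in> block_square v X"
    unfolding block_square_def cell_pts_def by (cases z) auto
qed

lemma block_square_subset_cell_pts:
  assumes "z \<in> block_square v X"
  obtains c where "block (c - v) = X" "z \<in> cell_pts c"
proof -
  define x0 y0 where "x0 = fst v + 2 * fst X" and "y0 = snd v + 2 * snd X"
  define c where "c = (if fst z \<le> of_int x0 + 1 then x0 else x0 + 1,
                       if snd z \<le> of_int y0 + 1 then y0 else y0 + 1)"
  have "block (c - v) = X"
    unfolding c_def block_def x0_def y0_def by auto
  moreover have "z \<in> cell_pts c"
    using assms unfolding c_def cell_pts_def block_square_def x0_def y0_def by (cases z) auto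
  ultimately show ?thesis
    by (rule that)
qed

lemma region_translate_blowup: "region ((+) v ` blowup Q) = \<Union> (block_square v ` Q)"
proof
  show "region ((+) v ` blowup Q) \<subseteq> \<Union> (block_square v ` Q)"
    unfolding region_def mem_image_plus_iff
    using cell_pts_subset_block_square by (fastforce simp: mem_image_plus_iff mem_blowup)
  show "\<Union> (block_square v ` Q) \<subseteq> region ((+) v ` blowup Q)"
  proof
    fix z
    assume "z \<in> \<Union> (block_square v ` Q)"
    then obtain X where "X \<in> Q" "z \<in> block_square v X"
      by blast
    then obtain c where "block (c - v) \<in> Q" "z \<in> cell_pts c"
      by (metis block_square_subset_cell_pts)
    then have "c \<in> (+) v ` blowup Q" "z \<in> cell_pts c"
      unfolding mem_image_plus_iff mem_blowup by simp_all
    then show "z \<in> region ((+) v ` blowup Q)"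
      unfolding region_def by blast
  qed
qed

lemma common_block_interval_nearby:
  fixes t :: real and p :: int
  obtains d where "d > 0" and "\<And>s. \<bar>s - t\<bar> < d \<Longrightarrow>
    \<exists>k. t \<in> {of_int (p + 2 * k) .. of_int (p + 2 * k) + 2} \<and> s \<in> {of_int (p + 2 * k) .. of_int (p + 2 * k) + 2}"
proof -
  define k where "k = \<lfloor>(t - of_int p) / 2\<rfloor>"
  define lo where "lo = (of_int (p + 2 * k) :: real)"
  have lo: "lo \<le> t" "t < lo + 2"
    using floor_correct[of "(t - of_int p) / 2"] unfolding lo_def k_def by (auto simp: field_simps)
  show ?thesis
  proof (cases "t = lo")
    case True
    show ?thesis
    proof (rule that[of 1])
      fix s :: real
      assume s: "\<bar>s - t\<bar> < 1"
      have "of_int (p + 2 * (k - 1)) = lo - 2"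
        unfolding lo_def by simp
      show "\<exists>k. t \<in> {of_int (p + 2 * k) .. of_int (p + 2 * k) + 2} \<and>
          s \<in> {of_int (p + 2 * k) .. of_int (p + 2 * k) + 2}"
      proof (cases "lo \<le> s")
        case True
        with \<open>t = lo\<close> s show ?thesis
          unfolding lo_def by (intro exI[of _ k]) (auto simp: abs_less_iff)
      next
        case False
        with \<open>t = lo\<close> s \<open>of_int (p + 2 * (k - 1)) = lo - 2\<close> show ?thesis
          by (intro exI[of _ "k - 1"]) (auto simp: abs_less_iff)
      qed
    qed simp
  next
    case False
    then show ?thesis
      using lo unfolding lo_def
      by (intro that[of "min (t - lo) (lo + 2 - t)"]) (auto simp: abs_less_iff lo_def intro!: exI[of _ k])
  qed
qed

lemma common_block_square_nearby:
  obtains d where "d > 0" and "\<And>w. dist w z < d \<Longrightarrow> \<exists>X. z \<in> block_square v X \<and> w \<in> block_square v X"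
proof -
  obtain d1 where d1: "d1 > 0" "\<And>s. \<bar>s - fst z\<bar> < d1 \<Longrightarrow> \<exists>k.
      fst z \<in> {of_int (fst v + 2 * k) .. of_int (fst v + 2 * k) + 2} \<and>
      s \<in> {of_int (fst v + 2 * k) .. of_int (fst v + 2 * k) + 2}"
    using common_block_interval_nearby by metis
  obtain d2 where d2: "d2 > 0" "\<And>s. \<bar>s - snd z\<bar> < d2 \<Longrightarrow> \<exists>k.
      snd z \<in> {of_int (snd v + 2 * k) .. of_int (snd v + 2 * k) + 2} \<and>
      s \<in> {of_int (snd v + 2 * k) .. of_int (snd v + 2 * k) + 2}"
    using common_block_interval_nearby by metis
  show ?thesis
  proof (rule that[of "min d1 d2"])
    fix w
    assume w: "dist w z < min d1 d2"
    have "\<bar>fst w - fst z\<bar> < d1" "\<bar>snd w - snd z\<bar> < d2"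
      using w dist_fst_le[of w z] dist_snd_le[of w z] unfolding dist_real_def by linarith+
    then obtain k1 k2 where
      "fst z \<in> {of_int (fst v + 2 * k1) .. of_int (fst v + 2 * k1) + 2}"
      "fst w \<in> {of_int (fst v + 2 * k1) .. of_int (fst v + 2 * k1) + 2}"
      "snd z \<in> {of_int (snd v + 2 * k2) .. of_int (snd v + 2 * k2) + 2}"
      "snd w \<in> {of_int (snd v + 2 * k2) .. of_int (snd v + 2 * k2) + 2}"
      using d1(2) d2(2) by blast
    then show "\<exists>X. z \<in> block_square v X \<and> w \<in> block_square v X"
      unfolding block_square_def by (intro exI[of _ "(k1, k2)"]) (simp add: mem_Times_iff)
  qed (use d1 d2 in simp)
qed

definition block_centre :: "int \<times> int \<Rightarrow> int \<times> int \<Rightarrow> real \<times> real" where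
  "block_centre v X = (of_int (fst v + 2 * fst X) + 1, of_int (snd v + 2 * snd X) + 1)"

lemma block_centre_mem_iff: "block_centre v Y \<in> block_square v X \<longleftrightarrow> X = Y"
proof
  assume "block_centre v Y \<in> block_square v X"
  then have "real_of_int (2 * (fst X - fst Y)) \<le> 1" "real_of_int (2 * (fst Y - fst X)) \<le> 1"
    "real_of_int (2 * (snd X - snd Y)) \<le> 1" "real_of_int (2 * (snd Y - snd X)) \<le> 1"
    unfolding block_centre_def block_square_def by auto
  then have "2 * (fst X - fst Y) \<le> 1" "2 * (fst Y - fst X) \<le> 1"
    "2 * (snd X - snd Y) \<le> 1" "2 * (snd Y - snd X) \<le> 1"
    by (simp_all only: of_int_le_1_iff)
  then show "X = Y"
    by (simp add: prod_eq_iff)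
qed (simp add: block_centre_def block_square_def)

lemma block_square_overlap:
  assumes "w \<in> block_square v W" "w \<in> block_square v Y"
  shows "\<bar>fst W - fst Y\<bar> \<le> 1 \<and> \<bar>snd W - snd Y\<bar> \<le> 1"
proof -
  have "real_of_int (fst W - fst Y) \<le> 1" "real_of_int (fst Y - fst W) \<le> 1"
    "real_of_int (snd W - snd Y) \<le> 1" "real_of_int (snd Y - snd W) \<le> 1"
    using assms unfolding block_square_def by (auto simp: mem_Times_iff)
  then show ?thesis
    by (simp only: of_int_le_1_iff) auto
qed

lemma eq_or_cell_adj:
  "(fst X = fst Y \<and> \<bar>snd X - snd Y\<bar> \<le> 1) \<or> (snd X = snd Y \<and> \<bar>fst X - fst Y\<bar> \<le> 1) \<Longrightarrow>
    X = Y \<or> cell_adj X Y"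
  unfolding cell_adj_def by (auto simp: prod_eq_iff)

(* The squares of W and Y are linked through the square of (fst Y, snd W), which contains w too. *)
lemma block_square_shared_point:
  assumes R: "region P = \<Union> (block_square v ` Q)"
    and w: "w \<notin> region P" "w \<in> block_square v W" "w \<in> block_square v Y"
    and "W \<in> C" and closed: "\<And>X Y. X \<in> C \<Longrightarrow> Y \<notin> Q \<Longrightarrow> cell_adj X Y \<Longrightarrow> Y \<in> C"
  shows "Y \<in> C"
proof -
  define M where "M = (fst Y, snd W)"
  have "w \<in> block_square v M"
    using w(2,3) unfolding M_def block_square_def by (simp add: mem_Times_iff)
  then have "M \<notin> Q" "Y \<notin> Q"
    using R w(1,3) by blast+
  have near: "\<bar>fst W - fst Y\<bar> \<le> 1" "\<bar>snd W - snd Y\<bar> \<le> 1"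
    using block_square_overlap[OF w(2,3)] by simp_all
  have "W = M \<or> cell_adj W M"
    using eq_or_cell_adj[of W M] near unfolding M_def by simp
  then have "M \<in> C"
    using closed[OF \<open>W \<in> C\<close> \<open>M \<notin> Q\<close>] \<open>W \<in> C\<close> by blast
  have "M = Y \<or> cell_adj M Y"
    using eq_or_cell_adj[of M Y] near unfolding M_def by (simp add: abs_minus_commute)
  then show "Y \<in> C"
    using closed[OF \<open>M \<in> C\<close> \<open>Y \<notin> Q\<close>] \<open>M \<in> C\<close> by blast
qed

definition outside_squares :: "cell set \<Rightarrow> int \<times> int \<Rightarrow> (int \<times> int) set \<Rightarrow> (real \<times> real) set" where
  "outside_squares P v B = - region P \<inter> \<Union> (block_square v ` B)"

lemma openin_block_squares:
  assumes R: "region P = \<Union> (block_square v ` Q)"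
    and closed: "\<And>X Y. X \<in> C \<Longrightarrow> Y \<notin> Q \<Longrightarrow> cell_adj X Y \<Longrightarrow> Y \<in> C"
  shows "openin (top_of_set (- region P)) (outside_squares P v C)"
  unfolding openin_euclidean_subtopology_iff outside_squares_def
proof (intro conjI ballI)
  fix x
  assume "x \<in> - region P \<inter> \<Union> (block_square v ` C)"
  then obtain W where W: "x \<notin> region P" "x \<in> block_square v W" "W \<in> C"
    by blast
  obtain d where d: "d > 0" "\<And>w. dist w x < d \<Longrightarrow> \<exists>X. x \<in> block_square v X \<and> w \<in> block_square v X"
    using common_block_square_nearby by metis
  have "x' \<in> - region P \<inter> \<Union> (block_square v ` C)" if x': "x' \<in> - region P" "dist x' x < d" for x'
  proof -
    obtain X where "x \<in> block_square v X" "x' \<in> block_square v X"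
      using d(2) x'(2) by blast
    moreover have "X \<in> C"
      using block_square_shared_point[OF R W(1,2) \<open>x \<in> block_square v X\<close> W(3) closed] .
    ultimately show ?thesis
      using x'(1) by blast
  qed
  with d(1) show "\<exists>e>0. \<forall>x'\<in>- region P. dist x' x < e \<longrightarrow> x' \<in> - region P \<inter> \<Union> (block_square v ` C)"
    by blast
qed blast

lemma block_squares_partition:
  assumes R: "region P = \<Union> (block_square v ` Q)"
    and closed: "\<And>X Y. X \<in> C \<Longrightarrow> Y \<notin> Q \<Longrightarrow> cell_adj X Y \<Longrightarrow> Y \<in> C"
  shows "- region P \<subseteq> outside_squares P v C \<union> outside_squares P v (- Q - C)"
    and "outside_squares P v C \<inter> outside_squares P v (- Q - C) = {}"
proof -
  show "- region P \<subseteq> outside_squares P v C \<union> outside_squares P v (- Q - C)"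
  proof
    fix z
    assume z: "z \<in> - region P"
    obtain X where "z \<in> block_square v X"
      using common_block_square_nearby[of z v] by (metis dist_self)
    moreover have "X \<notin> Q"
      using z calculation unfolding R by blast
    ultimately show "z \<in> outside_squares P v C \<union> outside_squares P v (- Q - C)"
      using z unfolding outside_squares_def by blast
  qed
  show "outside_squares P v C \<inter> outside_squares P v (- Q - C) = {}"
  proof (rule ccontr)
    assume "outside_squares P v C \<inter> outside_squares P v (- Q - C) \<noteq> {}"
    then obtain z W X where z: "z \<notin> region P" "z \<in> block_square v W" "W \<in> C" "z \<in> block_square v X" "X \<notin> C"
      unfolding outside_squares_def by blast
    have "X \<in> C"
      by (rule block_square_shared_point[OF R z(1,2,4,3)]) (rule closed)
    with z(5) show False ..
  qed
qed

lemma compl_blocks_subset_closed: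
  assumes R: "region P = \<Union> (block_square v ` Q)" and conn: "connected (- region P)"
    and "Z \<in> C" "Z \<notin> Q"
    and closed: "\<And>X Y. X \<in> C \<Longrightarrow> Y \<notin> Q \<Longrightarrow> cell_adj X Y \<Longrightarrow> Y \<in> C"
  shows "- Q \<subseteq> C"
proof
  have closed_rest: "Y \<in> - Q - C" if "X \<in> - Q - C" "Y \<notin> Q" "cell_adj X Y" for X Y
    using that closed[of Y X] cell_adj_sym[of X Y] by blast
  have centre: "block_centre v X \<in> outside_squares P v B" if "X \<in> B" "X \<notin> Q" for X B
    using that unfolding outside_squares_def R by (auto simp: block_centre_mem_iff)
  have open_C: "openin (top_of_set (- region P)) (outside_squares P v C)"
    by (rule openin_block_squares[OF R]) (rule closed)
  have open_rest: "openin (top_of_set (- region P)) (outside_squares P v (- Q - C))"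
    by (rule openin_block_squares[OF R]) (rule closed_rest)
  have cover: "- region P \<subseteq> outside_squares P v C \<union> outside_squares P v (- Q - C)"
    by (rule block_squares_partition(1)[OF R]) (rule closed)
  have disjoint: "outside_squares P v C \<inter> outside_squares P v (- Q - C) = {}"
    by (rule block_squares_partition(2)[OF R]) (rule closed)
  have nonempty: "outside_squares P v C \<noteq> {}"
    using centre assms(3,4) by blast
  have "outside_squares P v (- Q - C) = {}"
  proof (rule ccontr)
    assume "outside_squares P v (- Q - C) \<noteq> {}"
    then show False
      using conn open_C open_rest cover disjoint nonempty unfolding connected_openin by blast
  qed
  then show "Y \<in> C" if "Y \<in> - Q" for Y
    using centre[of Y "- Q - C"] that by blast
qed

theorem graph_connected_compl_blocks:
  assumes "connected (- region ((+) v ` blowup Q))"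
  shows "graph_connected (- Q)"
  unfolding graph_connected_def
proof (intro ballI)
  let ?E = "\<lambda>X Y. X \<in> - Q \<and> Y \<in> - Q \<and> cell_adj X Y"
  fix Z Y
  assume Z: "Z \<in> - Q" and Y: "Y \<in> - Q"
  have not_Q: "X \<notin> Q" if "?E\<^sup>*\<^sup>* Z X" for X
    using that Z by (induction rule: rtranclp_induct) auto
  have "- Q \<subseteq> {X. ?E\<^sup>*\<^sup>* Z X}"
  proof (rule compl_blocks_subset_closed[OF region_translate_blowup assms])
    fix X W
    assume "X \<in> {X. ?E\<^sup>*\<^sup>* Z X}" and W: "W \<notin> Q" "cell_adj X W"
    then have reach: "?E\<^sup>*\<^sup>* Z X"
      by simp
    moreover have "?E X W"
      using not_Q[OF reach] W by simp
    ultimately have "?E\<^sup>*\<^sup>* Z W"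
      by (rule rtranclp.rtrancl_into_rtrancl)
    then show "W \<in> {X. ?E\<^sup>*\<^sup>* Z X}"
      by simp
  qed (use Z in auto)
  with Y show "?E\<^sup>*\<^sup>* Z Y"
    by blast
qed

section \<open>The layers of a polyomino\<close>

definition cell_centre :: "cell \<Rightarrow> real \<times> real" where
  "cell_centre c = (of_int (fst c) + 1/2, of_int (snd c) + 1/2)"

lemma cell_centre_in_open: "cell_centre c \<in> cell_open c"
  unfolding cell_centre_def cell_open_def by auto

lemma cell_open_mem_pts:
  assumes "x \<in> cell_open c" "x \<in> cell_pts d"
  shows "d = c"
proof -
  have "real_of_int (fst c) < real_of_int (fst d) + 1" "real_of_int (fst d) < real_of_int (fst c) + 1"
    "real_of_int (snd c) < real_of_int (snd d) + 1" "real_of_int (snd d) < real_of_int (snd c) + 1"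
    using assms unfolding cell_open_def cell_pts_def by (cases x; auto)+
  then have "fst c < fst d + 1" "fst d < fst c + 1" "snd c < snd d + 1" "snd d < snd c + 1"
    by linarith+
  then show ?thesis
    by (simp add: prod_eq_iff)
qed

lemma mem_region_if_cell_open: "x \<in> cell_open c \<Longrightarrow> x \<in> region P \<longleftrightarrow> c \<in> P"
  unfolding region_def using cell_open_mem_pts[of x c]
  by (cases x) (fastforce simp: cell_open_def cell_pts_def)

lemma setdist_inf_le: "y \<in> A \<Longrightarrow> dinf x y \<le> r \<Longrightarrow> setdist_inf x A \<le> r"
  unfolding setdist_inf_def dinf_def by (rule cInf_lower2[of "dinf x y"]) (auto simp: dinf_def intro: bdd_belowI[of _ 0])

(* The infimum need not be attained, so any bound above 1 serves. *)
lemma setdist_inf_le_1D: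
  assumes "A \<noteq> {}" "setdist_inf x A \<le> 1"
  obtains y where "y \<in> A" "dinf x y < 5/4"
  using cInf_lessD[of "dinf x ` A" "5/4"] assms unfolding setdist_inf_def by force

lemma cell_near_if_centre_close:
  assumes "dinf (cell_centre c) y < 5/4" "y \<in> cell_pts d"
  shows "cell_near c d"
proof -
  have "\<bar>real_of_int (fst c) + 1/2 - fst y\<bar> < 5/4" "\<bar>real_of_int (snd c) + 1/2 - snd y\<bar> < 5/4"
    using assms(1) unfolding dinf_def cell_centre_def fst_conv snd_conv max_less_iff_conj by blast+
  moreover have "real_of_int (fst d) \<le> fst y" "fst y \<le> real_of_int (fst d) + 1"
    "real_of_int (snd d) \<le> snd y" "snd y \<le> real_of_int (snd d) + 1"
    using assms(2) unfolding cell_pts_def by auto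
  ultimately have "real_of_int (fst c - fst d) < 2" "real_of_int (fst d - fst c) < 2"
    "real_of_int (snd c - snd d) < 2" "real_of_int (snd d - snd c) < 2"
    unfolding abs_less_iff of_int_diff by linarith+
  then show ?thesis
    unfolding cell_near_def by linarith
qed

lemma cell_open_near:
  assumes x: "x \<in> cell_open c" and "cell_near c d"
  obtains y where "y \<in> cell_open d" "dinf x y \<le> 1"
proof
  show "(fst x + of_int (fst d - fst c), snd x + of_int (snd d - snd c)) \<in> cell_open d"
    using x unfolding cell_open_def by (cases x) auto
  have "\<bar>real_of_int (fst d - fst c)\<bar> \<le> 1" "\<bar>real_of_int (snd d - snd c)\<bar> \<le> 1"
    using assms(2) unfolding cell_near_def by linarith+
  then show "dinf x (fst x + of_int (fst d - fst c), snd x + of_int (snd d - snd c)) \<le> 1"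
    unfolding dinf_def by (simp add: abs_minus_commute)
qed

lemma cells_of_outer_ring:
  assumes "P \<noteq> {}"
  shows "cells_of (Binf (region P) 1 - region P) = layer (- P)"
proof (intro set_eqI iffI)
  fix c
  assume "c \<in> cells_of (Binf (region P) 1 - region P)"
  then have centre: "cell_centre c \<in> Binf (region P) 1 - region P"
    using cell_centre_in_open unfolding cells_of_def by blast
  then have "c \<notin> P"
    using mem_region_if_cell_open[OF cell_centre_in_open] by blast
  have "region P \<noteq> {}"
    using assms mem_region_if_cell_open[OF cell_centre_in_open] by blast
  moreover have "setdist_inf (cell_centre c) (region P) \<le> 1"
    using centre unfolding Binf_def by simp
  ultimately obtain y where "y \<in> region P" "dinf (cell_centre c) y < 5/4"
    by (rule setdist_inf_le_1D)
  then obtain d where "d \<in> P" "cell_near c d"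
    using cell_near_if_centre_close unfolding region_def by blast
  with \<open>c \<notin> P\<close> show "c \<in> layer (- P)"
    unfolding layer_def by blast
next
  fix c
  assume "c \<in> layer (- P)"
  then obtain d where "c \<notin> P" "d \<in> P" "cell_near c d"
    unfolding layer_def by blast
  have "x \<in> Binf (region P) 1 - region P" if x: "x \<in> cell_open c" for x
  proof -
    obtain y where "y \<in> cell_open d" "dinf x y \<le> 1"
      using cell_open_near[OF x \<open>cell_near c d\<close>] .
    then show ?thesis
      using setdist_inf_le[of y "region P"] mem_region_if_cell_open x \<open>c \<notin> P\<close> \<open>d \<in> P\<close>
      unfolding Binf_def by auto
  qed
  then show "c \<in> cells_of (Binf (region P) 1 - region P)"
    unfolding cells_of_def by blast
qed

lemma cells_of_inner_ring:
  assumes "finite P"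
  shows "cells_of (region P - Binf (region P) (-1)) = layer P"
proof (intro set_eqI iffI)
  fix c
  assume "c \<in> cells_of (region P - Binf (region P) (-1))"
  then have centre: "cell_centre c \<in> region P - Binf (region P) (-1)"
    using cell_centre_in_open unfolding cells_of_def by blast
  then have "c \<in> P"
    using mem_region_if_cell_open[OF cell_centre_in_open] by blast
  obtain e where "e \<notin> P"
    using ex_new_if_finite[OF _ assms] by (metis finite_prod infinite_UNIV_int)
  then have "- region P \<noteq> {}"
    using mem_region_if_cell_open[OF cell_centre_in_open] by blast
  moreover have "setdist_inf (cell_centre c) (- region P) \<le> 1"
    using centre unfolding Binf_def by simp
  ultimately obtain y where y: "y \<notin> region P" "dinf (cell_centre c) y < 5/4"
    by (rule setdist_inf_le_1D) simp
  define d where "d = (\<lfloor>fst y\<rfloor>, \<lfloor>snd y\<rfloor>)"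
  have "y \<in> cell_pts d"
    unfolding d_def cell_pts_def by (cases y) auto
  then have "d \<notin> P" "cell_near c d"
    using y cell_near_if_centre_close unfolding region_def by blast+
  with \<open>c \<in> P\<close> show "c \<in> layer P"
    unfolding layer_def by blast
next
  fix c
  assume "c \<in> layer P"
  then obtain d where "c \<in> P" "d \<notin> P" "cell_near c d"
    unfolding layer_def by blast
  have "x \<in> region P - Binf (region P) (-1)" if x: "x \<in> cell_open c" for x
  proof -
    obtain y where "y \<in> cell_open d" "dinf x y \<le> 1"
      using cell_open_near[OF x \<open>cell_near c d\<close>] .
    then show ?thesis
      using setdist_inf_le[of y "- region P"] mem_region_if_cell_open x \<open>c \<in> P\<close> \<open>d \<notin> P\<close>
      unfolding Binf_def by auto
  qed
  then show "c \<in> cells_of (region P - Binf (region P) (-1))"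
    unfolding cells_of_def by blast
qed

lemma translated_layer_ham_cycle:
  assumes "graph_connected S" "graph_connected (- S)"
    and "finite ((+) v ` layer (blowup S))" "(+) v ` layer (blowup S) \<noteq> {}"
  shows "\<exists>vs. ham_cycle ((+) v ` layer (blowup S)) vs \<and> even (length vs)"
proof -
  have "finite (layer (blowup S))" "layer (blowup S) \<noteq> {}"
    using assms(3,4) finite_image_iff[of "(+) v"] by (simp_all add: inj_on_def)
  then obtain vs where "ham_cycle (layer (blowup S)) vs"
    using layer_ham_cycle[OF assms(1,2)] by blast
  then have "ham_cycle ((+) v ` layer (blowup S)) (map ((+) v) vs)"
    by (rule ham_cycle_translate)
  then show ?thesis
    using ham_cycle_even_length by blast
qed

theorem lemma4:
  fixes P :: "cell set"
  assumes "polyomino P"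
    and "graph_connected P"
    and "consistent_parity P"
    and "without_holes P"
  shows "(\<exists>vs. ham_cycle (cells_of (Binf (region P) 1 - region P)) vs \<and> even (length vs))
       \<and> (\<exists>vs. ham_cycle (cells_of (region P - Binf (region P) (-1))) vs \<and> even (length vs))"
proof -
  have fin: "finite P" and ne: "P \<noteq> {}"
    using assms(1) unfolding polyomino_def by auto
  obtain v Q where P: "P = (+) v ` blowup Q"
    using consistent_parity_blowup[OF fin assms(3)] .
  have conn: "graph_connected Q" "graph_connected (- Q)"
    using graph_connected_blocks graph_connected_compl_blocks assms(2,4)
    unfolding P without_holes_def by blast+
  have outer: "layer (- P) = (+) v ` layer (blowup (- Q))"
    unfolding P blowup_Compl Compl_translate layer_translate ..
  have inner: "layer P = (+) v ` layer (blowup Q)"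
    unfolding P layer_translate ..
  have "\<exists>vs. ham_cycle (layer (- P)) vs \<and> even (length vs)"
    using translated_layer_ham_cycle[of "- Q" v] conn finite_layer_Compl[OF fin] layer_nonempty(2)[OF fin ne]
    unfolding outer by simp
  moreover have "\<exists>vs. ham_cycle (layer P) vs \<and> even (length vs)"
    using translated_layer_ham_cycle[of Q v] conn finite_subset[OF layer_subset fin] layer_nonempty(1)[OF fin ne]
    unfolding inner by simp
  ultimately show ?thesis
    unfolding cells_of_outer_ring[OF ne] cells_of_inner_ring[OF fin] ..
qed

end
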